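(* Let $N\ge 3$, $0<p<1$, and let $E_N$ be the minimal cost of a Hamiltonian cycle on $N$ points drawn independently and uniformly in $[0,1]$. Then $$\mathbb E[E_N]=\frac{\Gamma(N+1)}{\Gamma(N+p+1)}\left[(N-1)\,\Gamma(p+1)+\frac{\Gamma(N+p-1)}{\Gamma(N-1)}\right],$$ and consequently $\lim_{N\to\infty}N^{p-1}\,\mathbb E[E_N]=\Gamma(p+1)$.
   Context: For points $x_1,\dots,x_N\in[0,1]$ forming the vertices of the complete graph $\mathcal K_N$, the weight of the edge $\{x_i,x_j\}$ is $|x_i-x_j|^p$ and the cost of a Hamiltonian cycle is the sum of its edge weights; $E_N$ is the minimum of this cost over all Hamiltonian cycles. *)

theory Defs
  imports "HOL-Probability.Probability"
begin

definition ham_cost :: "nat \<Rightarrow> real \<Rightarrow> (nat \<Rightarrow> nat) \<Rightarrow> (nat \<Rightarrow> real) \<Rightarrow> real" where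
  "ham_cost N p \<sigma> x = (\<Sum>i<N. \<bar>x (\<sigma> i) - x (\<sigma> (Suc i mod N))\<bar> powr p)"

definition E_N :: "nat \<Rightarrow> real \<Rightarrow> (nat \<Rightarrow> real) \<Rightarrow> real" where
  "E_N N p x = Min {ham_cost N p \<sigma> x | \<sigma>. \<sigma> permutes {..<N}}"

definition unif_points :: "nat \<Rightarrow> (nat \<Rightarrow> real) measure" where
  "unif_points N = PiM {..<N} (\<lambda>_. uniform_measure lborel {0..1})"

definition expected_E :: "nat \<Rightarrow> real \<Rightarrow> real" where
  "expected_E N p = (\<integral>x. E_N N p x \<partial>unif_points N)"

end

theory Submission
  imports Defs "HOL-Combinatorics.Permutations" "HOL-Real_Asymp.Real_Asymp"
begin

text \<open>
  For \<open>0 < p \<le> 1\<close> the map \<open>t \<mapsto> t powr p\<close> is concave, so inserting the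
  largest point into a cycle through the other points costs at least as much as
  inserting it between their minimum and maximum. Inductively, visiting the points in
  increasing order is optimal, and \<open>E_N\<close> is the sum of the \<open>p\<close>-th powers of the
  \<open>N - 1\<close> spacings of the sample plus the \<open>p\<close>-th power of its range.

  Both parts are sums over ordered pairs of sample points, weighted by the indicator
  that no other point lies between (resp. outside) them. Integrating out the other
  \<open>N - 2\<close> points gives \<open>N (N - 1)\<close> times the integrals over \<open>0 \<le> a < b \<le> 1\<close> of
  \<open>(b - a)^p (1 - (b - a))^(N-2)\<close> and of \<open>(b - a)^(p+N-2)\<close>. Expanding the first
  binomially gives an alternating sum equal to \<open>(N - 1)! / pochhammer (p + 1) N\<close>, a
  quotient of Gamma values, and the asymptotics follow from Euler's limit formula
  for \<open>Gamma (p + 1)\<close>.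
\<close>

fun path_cost :: "real \<Rightarrow> real list \<Rightarrow> real" where
  "path_cost p (a # b # r) = \<bar>a - b\<bar> powr p + path_cost p (b # r)"
| "path_cost p _ = 0"

definition cycle_cost :: "real \<Rightarrow> real list \<Rightarrow> real" where
  "cycle_cost p xs = path_cost p xs + \<bar>last xs - hd xs\<bar> powr p"

lemma path_cost_snoc: "ys \<noteq> [] \<Longrightarrow> path_cost p (ys @ [a]) = path_cost p ys + \<bar>last ys - a\<bar> powr p"
proof (induction ys)
  case (Cons b ys)
  then show ?case by (cases ys) auto
qed simp

lemma path_cost_conv_sum: "path_cost p ys = (\<Sum>i<length ys - 1. \<bar>ys!i - ys!(Suc i)\<bar> powr p)"
proof (induction ys)
  case (Cons a r)
  show ?case
  proof (cases r)
    case (Cons b r')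
    have "(\<Sum>i<length (a#r) - 1. \<bar>(a#r)!i - (a#r)!(Suc i)\<bar> powr p)
      = \<bar>a - b\<bar> powr p + (\<Sum>i<length r - 1. \<bar>r!i - r!(Suc i)\<bar> powr p)"
      using Cons by (simp add: sum.lessThan_Suc_shift del: sum.lessThan_Suc)
    then show ?thesis using Cons.IH Cons by simp
  qed simp
qed simp

lemma cycle_cost_rotate1: "cycle_cost p (rotate1 xs) = cycle_cost p xs"
proof (cases xs)
  case Nil then show ?thesis by simp
next
  case (Cons a ys)
  show ?thesis
  proof (cases ys)
    case Nil then show ?thesis using Cons by simp
  next
    case (Cons b zs)
    have "cycle_cost p (rotate1 xs) = path_cost p ys + \<bar>last ys - a\<bar> powr p + \<bar>a - hd ys\<bar> powr p"
      using \<open>xs = a # ys\<close> Cons path_cost_snoc[of "b#zs" p a] by (simp add: cycle_cost_def)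
    also have "\<dots> = cycle_cost p xs"
      using \<open>xs = a # ys\<close> Cons by (simp add: cycle_cost_def abs_minus_commute)
    finally show ?thesis .
  qed
qed

lemma cycle_cost_rotate: "cycle_cost p (rotate n xs) = cycle_cost p xs"
  by (induction n) (auto simp: cycle_cost_rotate1)

lemma cycle_cost_singleton: "cycle_cost p [a] = 0"
  by (simp add: cycle_cost_def)

lemma cycle_cost_snoc:
  assumes "ys \<noteq> []"
  shows "cycle_cost p (ys @ [m]) = cycle_cost p ys - \<bar>last ys - hd ys\<bar> powr p + \<bar>last ys - m\<bar> powr p + \<bar>m - hd ys\<bar> powr p"
  using assms by (simp add: cycle_cost_def path_cost_snoc)

lemma cycle_cost_split_to_end: "cycle_cost p (us @ m # vs) = cycle_cost p ((vs @ us) @ [m])"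
proof -
  have "rotate (length (us @ [m])) (us @ m # vs) = (vs @ us) @ [m]"
    by (metis append.assoc append_Cons append_Nil rotate_append)
  then show ?thesis by (metis cycle_cost_rotate)
qed

lemma ham_cost_eq_cycle_cost:
  assumes "N \<ge> 1"
  shows "ham_cost N p \<sigma> x = cycle_cost p (map (x \<circ> \<sigma>) [0..<N])"
proof -
  let ?ys = "map (x \<circ> \<sigma>) [0..<N]"
  obtain M where N: "N = Suc M" using assms by (cases N) auto
  have "ham_cost N p \<sigma> x = (\<Sum>i<M. \<bar>x (\<sigma> i) - x (\<sigma> (Suc i mod N))\<bar> powr p)
        + \<bar>x (\<sigma> M) - x (\<sigma> (Suc M mod N))\<bar> powr p"
    by (simp add: ham_cost_def N)
  also have "(\<Sum>i<M. \<bar>x (\<sigma> i) - x (\<sigma> (Suc i mod N))\<bar> powr p) = path_cost p ?ys"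
    unfolding path_cost_conv_sum by (intro sum.cong) (auto simp: N nth_append mod_Suc, metis Suc_lessI)
  also have "\<bar>x (\<sigma> M) - x (\<sigma> (Suc M mod N))\<bar> = \<bar>last ?ys - hd ?ys\<bar>"
    by (simp add: N last_map hd_map hd_upt del: upt_Suc)
  finally show ?thesis by (simp add: cycle_cost_def comp_def)
qed

section \<open>The sorted cycle is optimal\<close>

lemma powr_increment_antimono:
  fixes p g s t :: real
  assumes p: "0 < p" "p \<le> 1" and g: "0 \<le> g" "g \<le> s" "s \<le> t"
  shows "t powr p - (t-g) powr p \<le> s powr p - (s-g) powr p"
proof -
  define h where "h y = (y+g) powr p - y powr p" for y
  have "h (t-g) \<le> h (s-g)"
  proof (rule DERIV_nonpos_imp_decreasing_open[of "s-g" "t-g" h])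
    show "s - g \<le> t - g" using g by simp
    fix y assume y: "s - g < y" "y < t - g"
    then have y0: "y > 0" using g by simp
    have d1: "DERIV (\<lambda>y. (y+g) powr p) y :> p * (y+g) powr (p - of_nat 1) * 1"
      using y0 g by (intro DERIV_fun_powr derivative_eq_intros) auto
    have d2: "DERIV (\<lambda>y. y powr p) y :> p * y powr (p - of_nat 1) * 1"
      using y0 g by (intro DERIV_fun_powr derivative_eq_intros) auto
    have "DERIV h y :> p * (y+g) powr (p - of_nat 1) * 1 - p * y powr (p - of_nat 1) * 1"
      unfolding h_def by (rule DERIV_diff[OF d1 d2])
    moreover have "(y+g) powr (p-1) \<le> y powr (p-1)"
      using y0 g p by (intro powr_mono2') auto
    ultimately show "\<exists>d. DERIV h y :> d \<and> d \<le> 0" using p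
      by (intro exI[of _ "p * (y+g) powr (p - of_nat 1) * 1 - p * y powr (p - of_nat 1) * 1"]) (auto simp: mult_left_mono)
  next
    show "continuous_on {s - g..t - g} h"
      unfolding h_def using p g by (intro continuous_intros continuous_on_powr') auto
  qed
  then show ?thesis unfolding h_def by simp
qed

lemma insertion_increment_le:
  fixes p m hi lo u v :: real
  assumes p: "0 < p" "p \<le> 1"
    and uv: "lo \<le> u" "u \<le> hi" "lo \<le> v" "v \<le> hi" and m: "hi \<le> m"
  shows "(m - hi) powr p + (m - lo) powr p - (hi - lo) powr p
         \<le> (m - u) powr p + (m - v) powr p - \<bar>u - v\<bar> powr p"
proof -
  have ordered: "(m - hi) powr p + (m - lo) powr p - (hi - lo) powr p
         \<le> (m - u) powr p + (m - v) powr p - (v - u) powr p"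
    if "lo \<le> u" "u \<le> v" "v \<le> hi" for u v
  proof -
    have concave: "(m - lo) powr p - (hi - lo) powr p \<le> (m - u) powr p - (hi - u) powr p"
      using powr_increment_antimono[OF p, of "m - hi" "m - u" "m - lo"] that m by simp
    have "(v - u) powr p \<le> (hi - u) powr p" "(m - hi) powr p \<le> (m - v) powr p"
      using that m p by (auto intro: powr_mono2)
    then show ?thesis using concave by linarith
  qed
  show ?thesis
  proof (cases "u \<le> v")
    case True
    then show ?thesis using ordered[of u v] uv by simp
  next
    case False
    then show ?thesis using ordered[of v u] uv by (simp add: abs_minus_commute)
  qed
qed

definition consecutive :: "'a::linorder set \<Rightarrow> 'a \<Rightarrow> 'a \<Rightarrow> bool" where
  "consecutive A a b \<longleftrightarrow> a < b \<and> (\<forall>c\<in>A. c \<le> a \<or> b \<le> c)"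

definition gaps_cost :: "real \<Rightarrow> real set \<Rightarrow> real" where
  "gaps_cost p A = (\<Sum>b\<in>A. \<Sum>a\<in>A. of_bool (consecutive A a b) * (b - a) powr p)"

definition sorted_cycle_cost :: "real \<Rightarrow> real set \<Rightarrow> real" where
  "sorted_cycle_cost p A = gaps_cost p A + (Max A - Min A) powr p"

lemma consecutive_insert_max:
  assumes "\<forall>c\<in>A. c < m" "b \<in> A"
  shows "consecutive (insert m A) a b \<longleftrightarrow> consecutive A a b"
  using assms unfolding consecutive_def by auto

lemma consecutive_insert_max_top:
  assumes A: "finite A" "a \<in> A" and m: "\<forall>c\<in>A. c < m"
  shows "consecutive (insert m A) a m \<longleftrightarrow> a = Max A"
proof -
  have "consecutive (insert m A) a m \<longleftrightarrow> (\<forall>c\<in>A. c \<le> a)"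
    using m A unfolding consecutive_def by force
  also have "\<dots> \<longleftrightarrow> a = Max A"
    using A by (auto intro: Max_eqI[symmetric])
  finally show ?thesis .
qed

lemma gaps_cost_insert_max:
  assumes A: "finite A" "A \<noteq> {}" and m: "\<forall>a\<in>A. a < m"
  shows "gaps_cost p (insert m A) = gaps_cost p A + (m - Max A) powr p"
proof -
  let ?B = "insert m A"
  let ?w = "\<lambda>a b. of_bool (consecutive ?B a b) * (b - a) powr p"
  have mA: "m \<notin> A" using m by auto
  have below: "(\<Sum>a\<in>?B. ?w a b) = (\<Sum>a\<in>A. of_bool (consecutive A a b) * (b - a) powr p)"
    if "b \<in> A" for b
    using that A mA m
    by (subst sum.insert) (auto simp: consecutive_insert_max consecutive_def[of _ m b] intro!: sum.cong)
  have "(\<Sum>a\<in>?B. ?w a m) = (\<Sum>a\<in>A. ?w a m)"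
    using A mA by (simp add: sum.insert consecutive_def[of _ m m])
  also have "\<dots> = (\<Sum>a\<in>A. if a = Max A then (m - a) powr p else 0)"
    using A m by (intro sum.cong) (auto simp: consecutive_insert_max_top)
  also have "\<dots> = (m - Max A) powr p"
    using A by (simp add: sum.delta')
  finally have top: "(\<Sum>a\<in>?B. ?w a m) = (m - Max A) powr p" .
  have "gaps_cost p ?B = (\<Sum>a\<in>?B. ?w a m) + (\<Sum>b\<in>A. \<Sum>a\<in>?B. ?w a b)"
    unfolding gaps_cost_def by (rule sum.insert[OF A(1) mA])
  then show ?thesis
    using top below by (simp add: gaps_cost_def)
qed

lemma sorted_cycle_cost_singleton: "sorted_cycle_cost p {a} = 0"
  by (simp add: sorted_cycle_cost_def gaps_cost_def)

lemma sorted_cycle_cost_insert_max: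
  assumes A: "finite A" "A \<noteq> {}" and m: "\<forall>a\<in>A. a < m"
  shows "sorted_cycle_cost p (insert m A) = sorted_cycle_cost p A - (Max A - Min A) powr p + (m - Max A) powr p + (m - Min A) powr p"
proof -
  have "Max (insert m A) = m" "Min (insert m A) = Min A"
    using A m by (auto intro!: Max_eqI Min_eqI simp: order_less_imp_le)
  then show ?thesis unfolding sorted_cycle_cost_def using gaps_cost_insert_max[OF A m] by simp
qed

lemma sorted_cycle_cost_increment_le:
  assumes p: "0 < p" "p \<le> 1" and ys: "ys \<noteq> []" and m: "\<forall>a\<in>set ys. a < m"
  shows "sorted_cycle_cost p (insert m (set ys)) - sorted_cycle_cost p (set ys)
         \<le> cycle_cost p (ys @ [m]) - cycle_cost p ys"
proof -
  let ?A = "set ys"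
  have A: "finite ?A" "?A \<noteq> {}" "hd ys \<in> ?A" "last ys \<in> ?A" using ys by auto
  have "(m - Max ?A) powr p + (m - Min ?A) powr p - (Max ?A - Min ?A) powr p
      \<le> (m - hd ys) powr p + (m - last ys) powr p - \<bar>hd ys - last ys\<bar> powr p"
    using insertion_increment_le[OF p, of "Min ?A" "hd ys" "Max ?A" "last ys" m] A m
    by (simp add: order_less_imp_le)
  moreover have "\<bar>last ys - m\<bar> = m - last ys" "\<bar>m - hd ys\<bar> = m - hd ys"
    using m A(3,4) by fastforce+
  ultimately show ?thesis
    using cycle_cost_snoc[OF ys, of p m] sorted_cycle_cost_insert_max[OF A(1,2) m]
    by (simp add: abs_minus_commute)
qed

lemma sorted_cycle_cost_le_cycle_cost:
  assumes p: "0 < p" "p \<le> 1"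
  shows "distinct xs \<Longrightarrow> xs \<noteq> [] \<Longrightarrow> sorted_cycle_cost p (set xs) \<le> cycle_cost p xs"
proof (induction "length xs" arbitrary: xs rule: less_induct)
  case less
  define m where "m = Max (set xs)"
  have "m \<in> set xs" using less.prems unfolding m_def by simp
  then obtain us vs where xs: "xs = us @ m # vs" by (meson split_list)
  define ys where "ys = vs @ us"
  show ?case
  proof (cases "ys = []")
    case True
    then show ?thesis using xs ys_def by (simp add: sorted_cycle_cost_singleton cycle_cost_singleton)
  next
    case False
    have set_xs: "set xs = insert m (set ys)" and "distinct ys" "m \<notin> set ys"
      using less.prems xs ys_def by auto
    moreover have "\<forall>a\<in>set ys. a < m"
      using set_xs \<open>m \<notin> set ys\<close> unfolding m_def by (metis List.finite_set Max_ge insert_iff less_le)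
    moreover have "sorted_cycle_cost p (set ys) \<le> cycle_cost p ys"
      using less.hyps[of ys] \<open>distinct ys\<close> False xs ys_def by simp
    ultimately show ?thesis
      using sorted_cycle_cost_increment_le[OF p False] cycle_cost_split_to_end[of p us m vs] xs ys_def
      by fastforce
  qed
qed

lemma sorted_hd_last:
  assumes "sorted ys" "ys \<noteq> []"
  shows "hd ys = Min (set ys)" "last ys = Max (set ys)"
proof -
  show "hd ys = Min (set ys)" using assms
    by (cases ys) (auto intro!: Min_eqI[symmetric])
  have "y \<le> last ys" if "y \<in> set ys" for y
    using assms that by (auto simp: sorted_iff_nth_mono in_set_conv_nth last_conv_nth)
  then show "last ys = Max (set ys)" using assms
    by (intro Max_eqI[symmetric]) auto
qed

lemma cycle_cost_sorted:
  "sorted xs \<Longrightarrow> distinct xs \<Longrightarrow> xs \<noteq> [] \<Longrightarrow> cycle_cost p xs = sorted_cycle_cost p (set xs)"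
proof (induction xs rule: rev_induct)
  case Nil then show ?case by simp
next
  case (snoc m ys)
  show ?case
  proof (cases "ys = []")
    case True then show ?thesis by (simp add: sorted_cycle_cost_singleton cycle_cost_singleton)
  next
    case False
    let ?A = "set ys"
    have s: "sorted ys" "distinct ys" using snoc.prems by (auto simp: sorted_append)
    have lt: "\<forall>a\<in>?A. a < m" using snoc.prems by (auto simp: sorted_append order.strict_iff_order)
    have fin: "finite ?A" "?A \<noteq> {}" using False by auto
    have hl: "hd ys = Min ?A" "last ys = Max ?A" using sorted_hd_last[OF s(1) False] by auto
    have "Max ?A < m" "Min ?A < m" "Min ?A \<le> Max ?A" using lt Max_in[OF fin] Min_in[OF fin] fin by auto
    then have "\<bar>last ys - m\<bar> = m - last ys" "\<bar>m - hd ys\<bar> = m - hd ys" "\<bar>last ys - hd ys\<bar> = Max ?A - Min ?A"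
      using hl by auto
    then show ?thesis using cycle_cost_snoc[OF False, of p m] snoc.IH[OF s False] sorted_cycle_cost_insert_max[OF fin lt] hl
      by simp
  qed
qed

lemma permuted_points:
  assumes "\<sigma> permutes {..<N}" "inj_on x {..<N}"
  shows "distinct (map (x \<circ> \<sigma>) [0..<N])" "set (map (x \<circ> \<sigma>) [0..<N]) = x ` {..<N}"
proof -
  have bij: "bij_betw \<sigma> {..<N} {..<N}" using assms(1) by (rule permutes_imp_bij)
  have "inj_on (x \<circ> \<sigma>) {..<N}"
    using bij assms(2) by (metis bij_betw_def comp_inj_on)
  then show "distinct (map (x \<circ> \<sigma>) [0..<N])"
    by (simp add: distinct_map atLeast0LessThan)
  have "set (map (x \<circ> \<sigma>) [0..<N]) = x ` (\<sigma> ` {..<N})"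
    by (simp add: image_comp atLeast0LessThan)
  also have "\<sigma> ` {..<N} = {..<N}" using bij by (simp add: bij_betw_def)
  finally show "set (map (x \<circ> \<sigma>) [0..<N]) = x ` {..<N}" .
qed

lemma sorting_permutation:
  fixes x :: "nat \<Rightarrow> 'a::linorder"
  obtains \<sigma> where "\<sigma> permutes {..<N}" "map (x \<circ> \<sigma>) [0..<N] = sort (map x [0..<N])"
proof -
  let ?xs = "map x [0..<N]"
  have "mset (sort ?xs) = mset ?xs" by simp
  then obtain \<sigma> where \<sigma>: "\<sigma> permutes {..<length ?xs}" "permute_list \<sigma> ?xs = sort ?xs"
    by (rule mset_eq_permutation)
  then have \<sigma>N: "\<sigma> permutes {..<N}" by simp
  have "permute_list \<sigma> ?xs = map (x \<circ> \<sigma>) [0..<N]"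
    unfolding permute_list_def using permutes_in_image[OF \<sigma>N] by (intro map_cong) auto
  then show ?thesis using that \<sigma>N \<sigma>(2) by simp
qed

lemma E_N_eq_sorted_cycle_cost:
  assumes p: "0 < p" "p \<le> 1" and N: "N \<ge> 1" and inj: "inj_on x {..<N}"
  shows "E_N N p x = sorted_cycle_cost p (x ` {..<N})"
  unfolding E_N_def
proof (rule Min_eqI)
  let ?S = "{ham_cost N p \<sigma> x | \<sigma>. \<sigma> permutes {..<N}}"
  have "?S = (\<lambda>\<sigma>. ham_cost N p \<sigma> x) ` {\<sigma>. \<sigma> permutes {..<N}}" by auto
  then show "finite ?S" by (simp add: finite_permutations)
  show "sorted_cycle_cost p (x ` {..<N}) \<le> c" if "c \<in> ?S" for c
  proof -
    from that obtain \<sigma> where \<sigma>: "\<sigma> permutes {..<N}" "c = ham_cost N p \<sigma> x" by auto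
    then show ?thesis
      using ham_cost_eq_cycle_cost[OF N] permuted_points[OF \<sigma>(1) inj] N
        sorted_cycle_cost_le_cycle_cost[OF p, of "map (x \<circ> \<sigma>) [0..<N]"]
      by auto
  qed
  obtain \<sigma> where \<sigma>: "\<sigma> permutes {..<N}" "map (x \<circ> \<sigma>) [0..<N] = sort (map x [0..<N])"
    by (rule sorting_permutation)
  have "ham_cost N p \<sigma> x = cycle_cost p (map (x \<circ> \<sigma>) [0..<N])"
    by (rule ham_cost_eq_cycle_cost[OF N])
  also have "\<dots> = sorted_cycle_cost p (x ` {..<N})"
    using permuted_points[OF \<sigma>(1) inj] \<sigma>(2) N by (subst cycle_cost_sorted) (auto simp del: set_sort)
  finally show "sorted_cycle_cost p (x ` {..<N}) \<in> ?S" using \<sigma>(1) by force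
qed

section \<open>The optimal cost as a sum over pairs of points\<close>

text \<open>The weight is cut off outside the unit square; this changes nothing for points in
  \<open>[0,1]\<close> and makes all pair functionals below bounded.\<close>

definition gap_weight :: "real \<Rightarrow> real \<Rightarrow> real \<Rightarrow> real" where
  "gap_weight p a b = of_bool (0 \<le> a \<and> a < b \<and> b \<le> 1) * (b - a) powr p"

lemma abs_gap_weight_le_1: "0 \<le> q \<Longrightarrow> \<bar>gap_weight q a b\<bar> \<le> 1"
  unfolding gap_weight_def using powr_mono2[of q "b-a" 1] by auto

lemma gap_weight_eq_0: "\<not> (0 \<le> a \<and> a < b \<and> b \<le> 1) \<Longrightarrow> gap_weight q a b = 0"
  unfolding gap_weight_def by simp

lemma gap_weight_mult_power: "gap_weight q a b * (b - a) ^ k = gap_weight (q + real k) a b"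
  unfolding gap_weight_def by (auto simp: powr_add powr_realpow)

lemma gap_weight_measurable[measurable]:
  assumes [measurable]: "f \<in> borel_measurable M" "g \<in> borel_measurable M"
  shows "(\<lambda>x. gap_weight q (f x) (g x)) \<in> borel_measurable M"
  unfolding gap_weight_def by measurable

lemma gap_weight_measurable_pair: "(\<lambda>w. gap_weight q (fst w) (snd w)) \<in> borel_measurable (borel \<Otimes>\<^sub>M borel)"
  by measurable

definition gap_pair_sum :: "real \<Rightarrow> nat set \<Rightarrow> (nat \<Rightarrow> real) \<Rightarrow> real" where
  "gap_pair_sum p I x = (\<Sum>j\<in>I. \<Sum>i\<in>I. gap_weight p (x i) (x j) *
     (\<Prod>k\<in>I-{i,j}. of_bool (x k \<le> x i \<or> x j \<le> x k)))"

definition range_pair_sum :: "real \<Rightarrow> nat set \<Rightarrow> (nat \<Rightarrow> real) \<Rightarrow> real" where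
  "range_pair_sum p I x = (\<Sum>j\<in>I. \<Sum>i\<in>I. gap_weight p (x i) (x j) *
     (\<Prod>k\<in>I-{i,j}. of_bool (x i \<le> x k \<and> x k \<le> x j)))"

lemma prod_of_bool_eq: "finite K \<Longrightarrow> (\<Prod>k\<in>K. (of_bool (P k) :: real)) = of_bool (\<forall>k\<in>K. P k)"
  by (induction K rule: finite_induct) auto

lemma range_powr_eq_extremal_pair_sum:
  assumes A: "finite A" "A \<noteq> {}" and p: "0 < p"
  shows "(\<Sum>b\<in>A. \<Sum>a\<in>A. of_bool (a < b \<and> (\<forall>c\<in>A. a \<le> c \<and> c \<le> b)) * (b - a) powr p)
       = (Max A - Min A) powr p"
proof -
  have extremal: "of_bool (a < b \<and> (\<forall>c\<in>A. a \<le> c \<and> c \<le> b)) * (b - a) powr p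
      = (if b = Max A then if a = Min A then (b - a) powr p else 0 else 0)"
    if ab: "a \<in> A" "b \<in> A" for a b
  proof (cases "b = Max A \<and> a = Min A")
    case True
    moreover have "a \<le> b" using True A by simp
    ultimately show ?thesis
      using A p by (cases "a = b") (auto simp: less_le)
  next
    case False
    then have "\<not> (a < b \<and> (\<forall>c\<in>A. a \<le> c \<and> c \<le> b))"
      using ab A by (metis Max_eqI Min_eqI)
    then show ?thesis using False by auto
  qed
  have "(\<Sum>b\<in>A. \<Sum>a\<in>A. of_bool (a < b \<and> (\<forall>c\<in>A. a \<le> c \<and> c \<le> b)) * (b - a) powr p)
      = (\<Sum>b\<in>A. if b = Max A then (\<Sum>a\<in>A. if a = Min A then (b - a) powr p else 0) else 0)"
    using extremal by (intro sum.cong) auto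
  then show ?thesis
    using A by (simp add: sum.delta')
qed

lemma gaps_cost_eq_gap_pair_sum:
  assumes I: "finite I" "inj_on x I" "x ` I \<subseteq> {0..1}"
  shows "gaps_cost p (x ` I) = gap_pair_sum p I x"
  unfolding gaps_cost_def gap_pair_sum_def sum.reindex[OF I(2)] comp_def
proof (intro sum.cong refl)
  fix i j assume ij: "i \<in> I" "j \<in> I"
  have "consecutive (x ` I) (x i) (x j) \<longleftrightarrow>
      x i < x j \<and> (\<forall>k\<in>I-{i,j}. x k \<le> x i \<or> x j \<le> x k)"
    using ij by (auto simp: consecutive_def)
  then show "of_bool (consecutive (x ` I) (x i) (x j)) * (x j - x i) powr p =
      gap_weight p (x i) (x j) * (\<Prod>k\<in>I - {i, j}. of_bool (x k \<le> x i \<or> x j \<le> x k))"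
    using I ij by (subst prod_of_bool_eq) (auto simp: gap_weight_def)
qed

lemma range_powr_eq_range_pair_sum:
  assumes I: "finite I" "I \<noteq> {}" "inj_on x I" "x ` I \<subseteq> {0..1}" and p: "0 < p"
  shows "(Max (x ` I) - Min (x ` I)) powr p = range_pair_sum p I x"
proof -
  have "range_pair_sum p I x = (\<Sum>b\<in>x ` I. \<Sum>a\<in>x ` I.
      of_bool (a < b \<and> (\<forall>c\<in>x ` I. a \<le> c \<and> c \<le> b)) * (b - a) powr p)"
    unfolding range_pair_sum_def sum.reindex[OF I(3)] comp_def
  proof (intro sum.cong refl)
    fix i j assume ij: "i \<in> I" "j \<in> I"
    have "(x i < x j \<and> (\<forall>c\<in>x ` I. x i \<le> c \<and> c \<le> x j)) \<longleftrightarrow>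
        x i < x j \<and> (\<forall>k\<in>I-{i,j}. x i \<le> x k \<and> x k \<le> x j)"
      using ij by auto
    then show "gap_weight p (x i) (x j) * (\<Prod>k\<in>I - {i, j}. of_bool (x i \<le> x k \<and> x k \<le> x j)) =
        of_bool (x i < x j \<and> (\<forall>c\<in>x ` I. x i \<le> c \<and> c \<le> x j)) * (x j - x i) powr p"
      using I ij by (subst prod_of_bool_eq) (auto simp: gap_weight_def)
  qed
  then show ?thesis
    using range_powr_eq_extremal_pair_sum[of "x ` I" p] I p by simp
qed

lemma E_N_eq_pair_sums:
  assumes p: "0 < p" "p \<le> 1" and N: "N \<ge> 1"
    and inj: "inj_on x {..<N}" and unit: "x ` {..<N} \<subseteq> {0..1}"
  shows "E_N N p x = gap_pair_sum p {..<N} x + range_pair_sum p {..<N} x"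
proof -
  have "{..<N} \<noteq> {}" using N by (simp add: lessThan_empty_iff)
  then show ?thesis
    using E_N_eq_sorted_cycle_cost[OF p N inj] gaps_cost_eq_gap_pair_sum[OF _ inj unit]
      range_powr_eq_range_pair_sum[OF _ _ inj unit p(1)]
    by (simp add: sorted_cycle_cost_def)
qed

section \<open>Integrals over independent uniform points\<close>

definition unif01 :: "real measure" where "unif01 = uniform_measure lborel {0..1}"

lemma sets_unif01[measurable_cong]: "sets unif01 = sets borel"
  by (simp add: unif01_def)

lemma space_unif01[simp]: "space unif01 = UNIV"
  by (simp add: unif01_def)

lemma prob_space_unif01: "prob_space unif01"
  unfolding unif01_def by (rule prob_space_uniform_measure) auto

interpretation unif01: prob_space unif01
  by (rule prob_space_unif01)

lemma unif01_density: "unif01 = density lborel (\<lambda>x. ennreal (indicator {0..1::real} x))"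
  unfolding unif01_def uniform_measure_def by (intro density_cong) (auto simp: indicator_def)

lemma measure_unif01: "A \<in> sets borel \<Longrightarrow> measure unif01 A = measure lborel ({0..1} \<inter> A)"
  unfolding unif01_def by (subst measure_uniform_measure) auto

lemma integral_unif01:
  fixes f :: "real \<Rightarrow> real"
  assumes [measurable]: "f \<in> borel_measurable borel"
  shows "integral\<^sup>L unif01 f = (LINT x:{0..1}|lborel. f x)"
  unfolding unif01_density set_lebesgue_integral_def
  by (subst integral_density) auto

lemma set_integral_Icc_eq_integral:
  fixes f :: "real \<Rightarrow> real"
  assumes "continuous_on {a..b} f"
  shows "(LINT x:{a..b}|lborel. f x) = integral {a..b} f"
  using set_borel_integral_eq_integral(2)[OF borel_integrable_atLeastAtMost'[OF assms]] .

lemma integral_powr_diff: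
  fixes q b :: real
  assumes q: "0 < q" and b: "0 \<le> b"
  shows "(LINT a:{0..b}|lborel. (b - a) powr q) = b powr (q+1) / (q+1)"
proof -
  have cont: "continuous_on {0..b} (\<lambda>a. (b - a) powr q)"
    using q by (intro continuous_on_powr' continuous_intros) auto
  define F where "F a = - ((b - a) powr (q+1) / (q+1))" for a
  have "((\<lambda>a. (b - a) powr q) has_integral (F b - F 0)) {0..b}"
  proof (rule fundamental_theorem_of_calculus_interior[OF b])
    show "continuous_on {0..b} F" unfolding F_def
      using q by (intro continuous_on_powr' continuous_intros) auto
    fix x assume x: "x \<in> {0<..<b}"
    have "DERIV (\<lambda>a. (b - a) powr (q+1)) x :> (q+1) * (b - x) powr (q + 1 - of_nat 1) * (-1)"
      using x by (intro DERIV_fun_powr derivative_eq_intros) auto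
    then have "DERIV F x :> (b - x) powr q"
      unfolding F_def using q x by (auto intro!: derivative_eq_intros)
    then show "(F has_vector_derivative (b - x) powr q) (at x)"
      by (simp add: has_real_derivative_iff_has_vector_derivative)
  qed
  then have "integral {0..b} (\<lambda>a. (b - a) powr q) = F b - F 0" by (rule integral_unique)
  then show ?thesis using set_integral_Icc_eq_integral[OF cont] q by (simp add: F_def)
qed

lemma set_integral_unit_powr:
  fixes r :: real
  assumes r: "0 < r"
  shows "(LINT b:{0..1}|lborel. b powr r) = 1 / (r + 1)"
proof -
  have "continuous_on {0..1} (\<lambda>b::real. b powr r)"
    using r by (intro continuous_on_powr' continuous_intros) auto
  moreover have "((\<lambda>b. b powr r) has_integral 1 / (r + 1)) {0..1::real}"
    using has_integral_powr_from_0[of r 1] r by simp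
  ultimately show ?thesis
    by (simp add: set_integral_Icc_eq_integral integral_unique)
qed

lemma double_integral_gap_weight:
  assumes q: "0 < q"
  shows "(\<integral>b. (\<integral>a. gap_weight q a b \<partial>unif01) \<partial>unif01) = 1 / ((q+1)*(q+2))"
proof -
  have inner: "(\<integral>a. gap_weight q a b \<partial>unif01) = b powr (q+1) / (q+1)" if b: "b \<in> {0..1}" for b
  proof -
    have "(\<integral>a. gap_weight q a b \<partial>unif01) = (LINT a:{0..1}|lborel. gap_weight q a b)"
      by (rule integral_unif01) (simp add: gap_weight_def)
    also have "\<dots> = (LINT a:{0..b}|lborel. (b - a) powr q)"
      unfolding set_lebesgue_integral_def
      using b q by (intro Bochner_Integration.integral_cong refl) (auto simp: gap_weight_def indicator_def)
    also have "\<dots> = b powr (q+1) / (q+1)" using integral_powr_diff[OF q] b by simp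
    finally show ?thesis .
  qed
  have "(\<integral>b. (\<integral>a. gap_weight q a b \<partial>unif01) \<partial>unif01) = (LINT b:{0..1}|lborel. (\<integral>a. gap_weight q a b \<partial>unif01))"
  proof (rule integral_unif01)
    have "(\<lambda>(b, a). gap_weight q a b) \<in> borel_measurable (borel \<Otimes>\<^sub>M unif01)"
      by measurable
    then show "(\<lambda>b. \<integral>a. gap_weight q a b \<partial>unif01) \<in> borel_measurable borel"
      by (rule unif01.borel_measurable_lebesgue_integral)
  qed
  also have "\<dots> = (LINT b:{0..1}|lborel. b powr (q+1) / (q+1))"
    using inner by (intro set_lebesgue_integral_cong) auto
  also have "\<dots> = (LINT b:{0..1}|lborel. b powr (q+1)) / (q+1)"
    by (simp add: set_integral_divide_zero)
  also have "\<dots> = 1 / ((q+1)*(q+2))"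
    using q by (simp add: set_integral_unit_powr add.assoc)
  finally show ?thesis .
qed

lemma measurable_compose2:
  assumes "(\<lambda>w. g (fst w) (snd w)) \<in> borel_measurable (borel \<Otimes>\<^sub>M borel)"
    and "f1 \<in> borel_measurable M" "f2 \<in> borel_measurable M"
  shows "(\<lambda>x. g (f1 x) (f2 x)) \<in> borel_measurable M"
  using measurable_compose[OF measurable_Pair[OF assms(2,3)] assms(1)] by simp

lemma measurable_compose3:
  assumes "(\<lambda>w. g (fst w) (fst (snd w)) (snd (snd w))) \<in> borel_measurable (borel \<Otimes>\<^sub>M (borel \<Otimes>\<^sub>M borel))"
    and "f1 \<in> borel_measurable M" "f2 \<in> borel_measurable M" "f3 \<in> borel_measurable M"
  shows "(\<lambda>x. g (f1 x) (f2 x) (f3 x)) \<in> borel_measurable M"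
  using measurable_compose[OF measurable_Pair[OF assms(2) measurable_Pair[OF assms(3,4)]] assms(1)] by simp

lemma finite_measure_PiM_unif01: "finite_measure (PiM J (\<lambda>_::nat. unif01))"
proof -
  have "prob_space (PiM J (\<lambda>_::nat. unif01))" by (intro prob_space_PiM prob_space_unif01)
  then show ?thesis by (simp add: prob_space_def)
qed

lemma abs_integral_unif01_le_1:
  fixes f :: "real \<Rightarrow> real"
  assumes [measurable]: "f \<in> borel_measurable borel" and f: "\<And>c. \<bar>f c\<bar> \<le> 1"
  shows "\<bar>\<integral>c. f c \<partial>unif01\<bar> \<le> 1"
proof -
  have "\<bar>\<integral>c. f c \<partial>unif01\<bar> \<le> (\<integral>c. \<bar>f c\<bar> \<partial>unif01)" by (rule integral_abs_bound)
  also have "\<dots> \<le> (\<integral>c. 1 \<partial>unif01)"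
    using f by (intro integral_mono unif01.integrable_const_bound[where B=1]) auto
  finally show ?thesis using unif01.prob_space by simp
qed

lemma integral_PiM_unif01_pair:
  fixes f :: "real \<Rightarrow> real \<Rightarrow> real" and i j :: nat
  assumes ij: "i \<noteq> j"
    and fm: "(\<lambda>w. f (fst w) (snd w)) \<in> borel_measurable (borel \<Otimes>\<^sub>M borel)"
    and fb: "\<And>a b. \<bar>f a b\<bar> \<le> B"
  shows "(\<integral>y. f (y i) (y j) \<partial>PiM {i,j} (\<lambda>_. unif01)) = (\<integral>b. (\<integral>a. f a b \<partial>unif01) \<partial>unif01)"
proof -
  interpret unif01_product: product_prob_space "\<lambda>_::nat. unif01" by unfold_locales
  note [measurable] = measurable_compose2[OF fm]
  have "(\<lambda>y. f (y i) (y j)) \<in> borel_measurable (PiM (insert i {j}) (\<lambda>_. unif01))"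
    by measurable
  then have "integrable (PiM (insert i {j}) (\<lambda>_. unif01)) (\<lambda>y. f (y i) (y j))"
    using fb by (intro finite_measure.integrable_const_bound[OF finite_measure_PiM_unif01, where B=B]) auto
  then have "(\<integral>y. f (y i) (y j) \<partial>PiM {i,j} (\<lambda>_. unif01))
      = (\<integral>y. (\<integral>a. f a (y j) \<partial>unif01) \<partial>PiM {j} (\<lambda>_. unif01))"
    using ij by (simp add: unif01_product.product_integral_insert)
  also have "\<dots> = (\<integral>b. (\<integral>a. f a b \<partial>unif01) \<partial>unif01)"
  proof (rule unif01_product.product_integral_singleton)
    have "(\<lambda>(b, a). f a b) \<in> borel_measurable (borel \<Otimes>\<^sub>M unif01)" by measurable
    then show "(\<lambda>b. \<integral>a. f a b \<partial>unif01) \<in> borel_measurable unif01"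
      by (simp add: measurable_cong_sets[OF sets_unif01 refl] unif01.borel_measurable_lebesgue_integral)
  qed
  finally show ?thesis .
qed

text \<open>Fubini for the pair functionals: the points other than \<open>x i\<close> and \<open>x j\<close> are integrated
  out first, each contributing the same factor.\<close>

lemma integral_PiM_pair_product:
  fixes g :: "real \<Rightarrow> real \<Rightarrow> real" and h :: "real \<Rightarrow> real \<Rightarrow> real \<Rightarrow> real" and I :: "nat set"
  assumes I: "finite I" "i \<in> I" "j \<in> I" "i \<noteq> j"
    and gm: "(\<lambda>w. g (fst w) (snd w)) \<in> borel_measurable (borel \<Otimes>\<^sub>M borel)"
    and hm: "(\<lambda>w. h (fst w) (fst (snd w)) (snd (snd w))) \<in> borel_measurable (borel \<Otimes>\<^sub>M (borel \<Otimes>\<^sub>M borel))"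
    and gb: "\<And>a b. \<bar>g a b\<bar> \<le> B" and hb: "\<And>a b c. \<bar>h a b c\<bar> \<le> 1"
  shows "integrable (PiM I (\<lambda>_. unif01)) (\<lambda>x. g (x i) (x j) * (\<Prod>k\<in>I-{i,j}. h (x i) (x j) (x k)))"
    and "(\<integral>x. g (x i) (x j) * (\<Prod>k\<in>I-{i,j}. h (x i) (x j) (x k)) \<partial>PiM I (\<lambda>_. unif01))
         = (\<integral>b. (\<integral>a. g a b * (\<integral>c. h a b c \<partial>unif01) ^ card (I-{i,j}) \<partial>unif01) \<partial>unif01)"
proof -
  interpret unif01_product: product_prob_space "\<lambda>_::nat. unif01" by unfold_locales
  note [measurable] = measurable_compose2[OF gm] measurable_compose3[OF hm]
  define K where "K = I - {i,j}"
  define P where "P a b = (\<integral>c. h a b c \<partial>unif01)" for a b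
  have K: "finite K" "I = {i,j} \<union> K" "{i,j} \<inter> K = {}" using I unfolding K_def by auto
  have Pm: "(\<lambda>w. P (fst w) (snd w)) \<in> borel_measurable (borel \<Otimes>\<^sub>M borel)"
  proof -
    have "(\<lambda>(w, c). h (fst w) (snd w) c) \<in> borel_measurable ((borel \<Otimes>\<^sub>M borel) \<Otimes>\<^sub>M unif01)"
      by measurable
    then show ?thesis unfolding P_def by (rule unif01.borel_measurable_lebesgue_integral)
  qed
  have Pb: "\<bar>P a b\<bar> \<le> 1" for a b
    unfolding P_def using hb by (intro abs_integral_unif01_le_1) (auto intro: measurable_compose3[OF hm])
  have gPb: "\<bar>g a b * P a b ^ card K\<bar> \<le> B" for a b
    using mult_mono[OF gb[of a b] power_le_one[OF abs_ge_zero Pb]] order_trans[OF abs_ge_zero gb]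
    by (simp add: abs_mult power_abs)
  let ?F = "\<lambda>x. g (x i) (x j) * (\<Prod>k\<in>K. h (x i) (x j) (x k))"
  have "\<bar>?F x\<bar> \<le> B" for x
  proof -
    have prod_le: "\<bar>\<Prod>k\<in>K. h (x i) (x j) (x k)\<bar> \<le> 1"
      using hb by (simp add: abs_prod prod_le_1)
    show ?thesis
      using mult_mono[OF gb prod_le] order_trans[OF abs_ge_zero gb] by (simp add: abs_mult)
  qed
  then have intF: "integrable (PiM I (\<lambda>_. unif01)) ?F"
    using I unfolding K_def
    by (intro finite_measure.integrable_const_bound[OF finite_measure_PiM_unif01, where B=B]) auto
  then show "integrable (PiM I (\<lambda>_. unif01)) (\<lambda>x. g (x i) (x j) * (\<Prod>k\<in>I-{i,j}. h (x i) (x j) (x k)))"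
    unfolding K_def .
  have "(\<integral>x. ?F x \<partial>PiM I (\<lambda>_. unif01))
      = (\<integral>y. (\<integral>z. ?F (merge {i,j} K (y, z)) \<partial>PiM K (\<lambda>_. unif01)) \<partial>PiM {i,j} (\<lambda>_. unif01))"
    using intF K by (subst K(2), intro unif01_product.product_integral_fold) auto
  also have "\<dots> = (\<integral>y. g (y i) (y j) * P (y i) (y j) ^ card K \<partial>PiM {i,j} (\<lambda>_. unif01))"
  proof (intro Bochner_Integration.integral_cong refl)
    fix y :: "nat \<Rightarrow> real"
    have "(\<integral>z. ?F (merge {i,j} K (y, z)) \<partial>PiM K (\<lambda>_. unif01))
        = g (y i) (y j) * (\<integral>z. (\<Prod>k\<in>K. h (y i) (y j) (z k)) \<partial>PiM K (\<lambda>_. unif01))"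
      using K by (subst integral_mult_right_zero[symmetric])
        (intro Bochner_Integration.integral_cong refl arg_cong2[where f="(*)"] prod.cong; auto simp: merge_def)
    also have "(\<integral>z. (\<Prod>k\<in>K. h (y i) (y j) (z k)) \<partial>PiM K (\<lambda>_. unif01)) = (\<Prod>k\<in>K. P (y i) (y j))"
      unfolding P_def
      using hb by (intro unif01_product.product_integral_prod K unif01.integrable_const_bound[where B=1]) auto
    finally show "(\<integral>z. ?F (merge {i,j} K (y, z)) \<partial>PiM K (\<lambda>_. unif01)) = g (y i) (y j) * P (y i) (y j) ^ card K"
      by simp
  qed
  also have "\<dots> = (\<integral>b. (\<integral>a. g a b * P a b ^ card K \<partial>unif01) \<partial>unif01)"
    using I(4) gPb by (intro integral_PiM_unif01_pair) (measurable, auto intro: measurable_compose2[OF Pm])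
  finally show "(\<integral>x. g (x i) (x j) * (\<Prod>k\<in>I-{i,j}. h (x i) (x j) (x k)) \<partial>PiM I (\<lambda>_. unif01))
         = (\<integral>b. (\<integral>a. g a b * (\<integral>c. h a b c \<partial>unif01) ^ card (I-{i,j}) \<partial>unif01) \<partial>unif01)"
    unfolding K_def P_def .
qed

lemma integral_unif01_point: "(\<integral>a. (of_bool (a = b) :: real) \<partial>unif01) = 0"
proof -
  have "(\<integral>a. (of_bool (a = b) :: real) \<partial>unif01) = (\<integral>a. indicator {b} a \<partial>unif01)"
    by (intro Bochner_Integration.integral_cong) (auto simp: indicator_def)
  also have "\<dots> = measure unif01 {b}" by simp
  also have "\<dots> = 0"
  proof -
    have "{0..1} \<inter> {b} = (if b \<in> {0..1} then {b..b} else {})" by auto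
    then show ?thesis
      by (simp add: measure_unif01 del: atLeastAtMost_singleton)
  qed
  finally show ?thesis .
qed

lemma integral_unif01_between:
  assumes "0 \<le> a" "a \<le> b" "b \<le> 1"
  shows "(\<integral>c. of_bool (a \<le> c \<and> c \<le> b) \<partial>unif01) = b - a"
proof -
  have "(\<integral>c. of_bool (a \<le> c \<and> c \<le> b) \<partial>unif01) = (\<integral>c. indicator {a..b} c \<partial>unif01)"
    by (intro Bochner_Integration.integral_cong) (auto simp: indicator_def)
  also have "\<dots> = measure unif01 {a..b}" by simp
  also have "\<dots> = b - a" using assms by (simp add: measure_unif01 Int_absorb1)
  finally show ?thesis .
qed

lemma integral_unif01_outside:
  assumes "0 \<le> a" "a \<le> b" "b \<le> 1"
  shows "(\<integral>c. of_bool (c \<le> a \<or> b \<le> c) \<partial>unif01) = 1 - (b - a)"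
proof -
  have "(\<integral>c. of_bool (c \<le> a \<or> b \<le> c) \<partial>unif01) = (\<integral>c. 1 - indicator {a<..<b} c \<partial>unif01)"
    by (intro Bochner_Integration.integral_cong) (auto simp: indicator_def)
  also have "\<dots> = 1 - measure unif01 {a<..<b}"
    by (subst Bochner_Integration.integral_diff) (auto simp: unif01.prob_space[simplified] intro!: unif01.integrable_const_bound[where B=1])
  also have "\<dots> = 1 - (b - a)" using assms by (simp add: measure_unif01 Int_absorb1 subset_eq)
  finally show ?thesis .
qed

lemma borel_measurable_integral_unif01:
  fixes f :: "real \<Rightarrow> real \<Rightarrow> real"
  assumes [measurable]: "(\<lambda>w. f (fst w) (snd w)) \<in> borel_measurable (borel \<Otimes>\<^sub>M borel)"
  shows "(\<lambda>b. \<integral>a. f a b \<partial>unif01) \<in> borel_measurable borel"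
proof -
  have "(\<lambda>(b, a). f a b) \<in> borel_measurable (borel \<Otimes>\<^sub>M unif01)"
    using measurable_compose[OF measurable_Pair[OF measurable_snd measurable_fst] assms]
    by (simp add: case_prod_beta measurable_cong_sets[OF sets_pair_measure_cong[OF refl sets_unif01] refl])
  then show ?thesis by (rule unif01.borel_measurable_lebesgue_integral[where f="\<lambda>b a. f a b"])
qed

lemma range_pair_integral:
  assumes p: "0 < p"
  shows "(\<integral>b. (\<integral>a. gap_weight p a b * (\<integral>c. of_bool (a \<le> c \<and> c \<le> b) \<partial>unif01) ^ n \<partial>unif01) \<partial>unif01)
       = 1 / ((p + n + 1) * (p + n + 2))"
proof -
  have "(\<integral>b. (\<integral>a. gap_weight p a b * (\<integral>c. of_bool (a \<le> c \<and> c \<le> b) \<partial>unif01) ^ n \<partial>unif01) \<partial>unif01)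
      = (\<integral>b. (\<integral>a. gap_weight (p + n) a b \<partial>unif01) \<partial>unif01)"
  proof (intro Bochner_Integration.integral_cong refl)
    fix a b
    show "gap_weight p a b * (\<integral>c. of_bool (a \<le> c \<and> c \<le> b) \<partial>unif01) ^ n = gap_weight (p + n) a b"
    proof (cases "0 \<le> a \<and> a < b \<and> b \<le> 1")
      case True then show ?thesis using integral_unif01_between[of a b] gap_weight_mult_power[of p a b n] by simp
    next
      case False then show ?thesis by (simp add: gap_weight_eq_0[OF False])
    qed
  qed
  also have "\<dots> = 1 / ((p + n + 1) * (p + n + 2))"
    using double_integral_gap_weight[of "p + n"] p by (simp add: add.assoc)
  finally show ?thesis .
qed

lemma double_integral_unif01_sum:
  fixes f :: "'k \<Rightarrow> real \<Rightarrow> real \<Rightarrow> real"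
  assumes fm: "\<And>k. (\<lambda>w. f k (fst w) (snd w)) \<in> borel_measurable (borel \<Otimes>\<^sub>M borel)"
    and fb: "\<And>k a b. \<bar>f k a b\<bar> \<le> 1"
  shows "(\<integral>b. (\<integral>a. (\<Sum>k\<in>K. c k * f k a b) \<partial>unif01) \<partial>unif01)
       = (\<Sum>k\<in>K. c k * (\<integral>b. (\<integral>a. f k a b \<partial>unif01) \<partial>unif01))"
proof -
  have "(\<lambda>a. f k a b) \<in> borel_measurable borel" for k b
    using measurable_compose2[OF fm, of "\<lambda>a. a" borel "\<lambda>_. b"] by simp
  then have inner: "integrable unif01 (\<lambda>a. f k a b)" for k b
    using fb by (intro unif01.integrable_const_bound[where B=1]) auto
  have "(\<lambda>b. \<integral>a. f k a b \<partial>unif01) \<in> borel_measurable borel" for k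
    by (rule borel_measurable_integral_unif01[OF fm])
  moreover have "\<bar>\<integral>a. f k a b \<partial>unif01\<bar> \<le> 1" for k b
    using fb \<open>\<And>k b. (\<lambda>a. f k a b) \<in> borel_measurable borel\<close> by (intro abs_integral_unif01_le_1)
  ultimately have outer: "integrable unif01 (\<lambda>b. \<integral>a. f k a b \<partial>unif01)" for k
    by (intro unif01.integrable_const_bound[where B=1]) auto
  show ?thesis
    using inner outer by (simp add: Bochner_Integration.integral_sum)
qed

lemma gap_weight_mult_complement_power:
  "gap_weight p a b * (1 - (b - a)) ^ n
     = (\<Sum>k\<le>n. (of_nat (n choose k) * (-1)^k) * gap_weight (p + k) a b)"
proof -
  have "gap_weight p a b * (1 - (b - a)) ^ n = gap_weight p a b * (- (b - a) + 1) ^ n"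
    by (rule arg_cong[where f="\<lambda>t. gap_weight p a b * t ^ n"]) simp
  also have "\<dots> = (\<Sum>k\<le>n. gap_weight p a b * (of_nat (n choose k) * (- (b - a)) ^ k))"
    by (simp add: binomial_ring sum_distrib_left)
  also have "\<dots> = (\<Sum>k\<le>n. (of_nat (n choose k) * (-1)^k) * (gap_weight p a b * (b - a) ^ k))"
    using power_minus[of "b - a"] by (intro sum.cong refl) (simp only: mult_ac)
  finally show ?thesis by (simp add: gap_weight_mult_power)
qed

lemma gap_pair_integral:
  assumes p: "0 < p"
  shows "(\<integral>b. (\<integral>a. gap_weight p a b * (\<integral>c. of_bool (c \<le> a \<or> b \<le> c) \<partial>unif01) ^ n \<partial>unif01) \<partial>unif01)
       = (\<Sum>k\<le>n. of_nat (n choose k) * (-1)^k / ((p + k + 1) * (p + k + 2)))"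
proof -
  have "gap_weight p a b * (\<integral>c. of_bool (c \<le> a \<or> b \<le> c) \<partial>unif01) ^ n
      = (\<Sum>k\<le>n. (of_nat (n choose k) * (-1)^k) * gap_weight (p + k) a b)" for a b
  proof (cases "0 \<le> a \<and> a < b \<and> b \<le> 1")
    case True
    then show ?thesis
      using integral_unif01_outside[of a b] gap_weight_mult_complement_power[of p a b n] by simp
  next
    case False
    then show ?thesis by (simp add: gap_weight_eq_0)
  qed
  then have "(\<integral>b. (\<integral>a. gap_weight p a b * (\<integral>c. of_bool (c \<le> a \<or> b \<le> c) \<partial>unif01) ^ n \<partial>unif01) \<partial>unif01)
      = (\<Sum>k\<le>n. (of_nat (n choose k) * (-1)^k) * (\<integral>b. (\<integral>a. gap_weight (p + k) a b \<partial>unif01) \<partial>unif01))"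
    using p by (simp add: double_integral_unif01_sum abs_gap_weight_le_1)
  also have "\<dots> = (\<Sum>k\<le>n. of_nat (n choose k) * (-1)^k / ((p + k + 1) * (p + k + 2)))"
    using p double_integral_gap_weight[of "p + real k" for k] by (intro sum.cong refl) (simp add: add.assoc)
  finally show ?thesis .
qed

section \<open>The expected optimal cost\<close>

lemma measurable_component_unif01: "k \<in> I \<Longrightarrow> (\<lambda>x. x k) \<in> borel_measurable (PiM I (\<lambda>_. unif01))"
  using measurable_component_singleton[of k I "\<lambda>_. unif01"]
  by (simp add: measurable_cong_sets[OF refl sets_unif01])

lemma borel_measurable_Min_image:
  fixes h :: "'s \<Rightarrow> 'a \<Rightarrow> real"
  assumes "finite S" "S \<noteq> {}" "\<And>s. s \<in> S \<Longrightarrow> h s \<in> borel_measurable M"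
  shows "(\<lambda>x. Min ((\<lambda>s. h s x) ` S)) \<in> borel_measurable M"
  using assms
proof (induction S rule: finite_ne_induct)
  case (singleton s) then show ?case by simp
next
  case (insert s S)
  have "(\<lambda>x. Min ((\<lambda>s. h s x) ` insert s S)) = (\<lambda>x. min (h s x) (Min ((\<lambda>s. h s x) ` S)))"
    using insert.hyps by (auto simp: Min_insert)
  then show ?case using insert by (simp add: borel_measurable_min)
qed

lemma ham_cost_measurable:
  assumes "\<sigma> permutes {..<N}"
  shows "ham_cost N p \<sigma> \<in> borel_measurable (PiM {..<N} (\<lambda>_. unif01))"
proof -
  have "(\<lambda>x. \<bar>x (\<sigma> i) - x (\<sigma> (Suc i mod N))\<bar> powr p) \<in> borel_measurable (PiM {..<N} (\<lambda>_. unif01))"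
    if i: "i \<in> {..<N}" for i
  proof -
    have "\<sigma> i \<in> {..<N}" "\<sigma> (Suc i mod N) \<in> {..<N}"
      using permutes_in_image[OF assms] i by auto
    note [measurable] = measurable_component_unif01[OF this(1)] measurable_component_unif01[OF this(2)]
    show ?thesis by measurable
  qed
  then show ?thesis unfolding ham_cost_def[abs_def] by (intro borel_measurable_sum) auto
qed

lemma E_N_measurable: "E_N N p \<in> borel_measurable (PiM {..<N} (\<lambda>_. unif01))"
proof -
  have "E_N N p = (\<lambda>x. Min ((\<lambda>\<sigma>. ham_cost N p \<sigma> x) ` {\<sigma>. \<sigma> permutes {..<N}}))"
    unfolding E_N_def by (intro ext arg_cong[where f=Min]) auto
  also have "\<dots> \<in> borel_measurable (PiM {..<N} (\<lambda>_. unif01))"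
    by (intro borel_measurable_Min_image ham_cost_measurable) (auto intro: finite_permutations permutes_id)
  finally show ?thesis .
qed

lemma AE_PiM_unif01_in_unit:
  assumes "finite I"
  shows "AE x in PiM I (\<lambda>_. unif01). \<forall>k\<in>I. x k \<in> {0..1}"
proof -
  have "AE x in unif01. x \<in> {0..1}" unfolding unif01_def by (subst AE_uniform_measure) auto
  then show ?thesis
    using assms by (intro eventually_ball_finite ballI AE_PiM_component) (auto simp: prob_space_unif01)
qed

lemma AE_PiM_unif01_neq:
  fixes I :: "nat set"
  assumes I: "finite I" "i \<in> I" "j \<in> I" "i \<noteq> j"
  shows "AE x in PiM I (\<lambda>_. unif01). x i \<noteq> x j"
proof -
  have "(\<lambda>w::real \<times> real. of_bool (fst w \<le> snd w \<and> snd w \<le> fst w) :: real)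
      \<in> borel_measurable (borel \<Otimes>\<^sub>M borel)" by measurable
  moreover have "(\<lambda>w::real \<times> real. of_bool (fst w \<le> snd w \<and> snd w \<le> fst w) :: real)
      = (\<lambda>w. of_bool (fst w = snd w))"
    by (auto simp: antisym_conv)
  ultimately have eq_measurable: "(\<lambda>w::real \<times> real. of_bool (fst w = snd w) :: real)
      \<in> borel_measurable (borel \<Otimes>\<^sub>M borel)" by simp
  note pair = integral_PiM_pair_product[where g="\<lambda>a b. of_bool (a = b)" and h="\<lambda>a b c. 1" and B=1,
      OF I eq_measurable]
  have "(\<integral>x. (of_bool (x i = x j) :: real) \<partial>PiM I (\<lambda>_. unif01)) = 0"
    using pair(2) unif01.prob_space by (simp add: integral_unif01_point)
  then have "AE x in PiM I (\<lambda>_. unif01). (of_bool (x i = x j) :: real) = 0"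
    using integral_nonneg_eq_0_iff_AE[OF pair(1)[simplified]] by simp
  then show ?thesis by eventually_elim simp
qed

lemma AE_PiM_unif01_inj_on:
  fixes I :: "nat set"
  assumes "finite I"
  shows "AE x in PiM I (\<lambda>_. unif01). inj_on x I"
proof -
  have "AE x in PiM I (\<lambda>_. unif01). \<forall>i\<in>I. \<forall>j\<in>I. i \<noteq> j \<longrightarrow> x i \<noteq> x j"
    using assms by (intro eventually_ball_finite ballI) (auto intro: AE_PiM_unif01_neq)
  then show ?thesis by eventually_elim (auto simp: inj_on_def)
qed

lemma sum_sum_offdiag_const:
  fixes c :: real
  assumes "finite I"
  shows "(\<Sum>j\<in>I. \<Sum>i\<in>I. if i = j then 0 else c) = real (card I) * (real (card I) - 1) * c"
proof -
  have "(\<Sum>i\<in>I. if i = j then 0 else c) = (real (card I) - 1) * c" if "j \<in> I" for j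
  proof -
    have "(\<Sum>i\<in>I. if i = j then 0 else c) = (\<Sum>i\<in>I - {j}. c)"
      using assms that by (subst sum.remove[of I j]) (auto intro!: sum.cong)
    also have "\<dots> = (real (card I) - 1) * c"
    proof -
      have "card I \<ge> 1" using assms that by (metis One_nat_def Suc_leI card_gt_0_iff empty_iff)
      then show ?thesis using assms that by (simp add: of_nat_diff)
    qed
    finally show ?thesis .
  qed
  then show ?thesis by simp
qed

lemma integral_pair_sum:
  fixes I :: "nat set" and h :: "real \<Rightarrow> real \<Rightarrow> real \<Rightarrow> real"
  assumes p: "0 < p" and I: "finite I"
    and hm: "(\<lambda>w. h (fst w) (fst (snd w)) (snd (snd w))) \<in> borel_measurable (borel \<Otimes>\<^sub>M (borel \<Otimes>\<^sub>M borel))"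
    and hb: "\<And>a b c. \<bar>h a b c\<bar> \<le> 1"
    and v: "(\<integral>b. (\<integral>a. gap_weight p a b * (\<integral>c. h a b c \<partial>unif01) ^ (card I - 2) \<partial>unif01) \<partial>unif01) = v"
  defines "F \<equiv> \<lambda>x. \<Sum>j\<in>I. \<Sum>i\<in>I. gap_weight p (x i) (x j) * (\<Prod>k\<in>I-{i,j}. h (x i) (x j) (x k))"
  shows "integrable (PiM I (\<lambda>_. unif01)) F"
    and "(\<integral>x. F x \<partial>PiM I (\<lambda>_. unif01)) = real (card I) * (real (card I) - 1) * v"
proof -
  let ?T = "\<lambda>i j x. gap_weight p (x i) (x j) * (\<Prod>k\<in>I-{i,j}. h (x i) (x j) (x k))"
  have gb: "\<And>a b. \<bar>gap_weight p a b\<bar> \<le> 1" using p by (intro abs_gap_weight_le_1) simp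
  have pair_term: "integrable (PiM I (\<lambda>_. unif01)) (?T i j) \<and>
      (\<integral>x. ?T i j x \<partial>PiM I (\<lambda>_. unif01)) = (if i = j then 0 else v)"
    if ij: "i \<in> I" "j \<in> I" for i j
  proof (cases "i = j")
    case True
    then show ?thesis by (simp add: gap_weight_def)
  next
    case False
    have "card (I - {i,j}) = card I - 2"
      using I ij False by (simp add: card_Diff_subset)
    then show ?thesis
      using integral_PiM_pair_product[where g="gap_weight p" and B=1, OF I ij False
          gap_weight_measurable_pair hm gb hb] False v
      by simp
  qed
  then show "integrable (PiM I (\<lambda>_. unif01)) F"
    unfolding F_def by (intro Bochner_Integration.integrable_sum) auto
  have "(\<integral>x. F x \<partial>PiM I (\<lambda>_. unif01)) = (\<Sum>j\<in>I. \<Sum>i\<in>I. if i = j then 0 else v)"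
    using pair_term unfolding F_def
    by (simp add: Bochner_Integration.integral_sum Bochner_Integration.integrable_sum)
  also have "\<dots> = real (card I) * (real (card I) - 1) * v" by (rule sum_sum_offdiag_const[OF I])
  finally show "(\<integral>x. F x \<partial>PiM I (\<lambda>_. unif01)) = real (card I) * (real (card I) - 1) * v" .
qed

lemma unif_points_eq_PiM_unif01: "unif_points N = PiM {..<N} (\<lambda>_. unif01)"
  by (simp add: unif_points_def unif01_def)

lemma integral_gap_pair_sum:
  assumes p: "0 < p" and I: "finite I"
  shows "integrable (PiM I (\<lambda>_. unif01)) (gap_pair_sum p I)"
    and "(\<integral>x. gap_pair_sum p I x \<partial>PiM I (\<lambda>_. unif01)) = real (card I) * (real (card I) - 1) *
      (\<Sum>k\<le>card I - 2. of_nat ((card I - 2) choose k) * (-1)^k / ((p + k + 1) * (p + k + 2)))"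
proof -
  have "(\<lambda>w::real \<times> real \<times> real. of_bool (snd (snd w) \<le> fst w \<or> fst (snd w) \<le> snd (snd w)) :: real)
      \<in> borel_measurable (borel \<Otimes>\<^sub>M (borel \<Otimes>\<^sub>M borel))" by measurable
  note pair_sum = integral_pair_sum[where h="\<lambda>a b c. of_bool (c \<le> a \<or> b \<le> c)",
      OF p I this _ gap_pair_integral[OF p]]
  show "integrable (PiM I (\<lambda>_. unif01)) (gap_pair_sum p I)"
    and "(\<integral>x. gap_pair_sum p I x \<partial>PiM I (\<lambda>_. unif01)) = real (card I) * (real (card I) - 1) *
      (\<Sum>k\<le>card I - 2. of_nat ((card I - 2) choose k) * (-1)^k / ((p + k + 1) * (p + k + 2)))"
    using pair_sum unfolding gap_pair_sum_def[abs_def] by auto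
qed

lemma integral_range_pair_sum:
  assumes p: "0 < p" and I: "finite I"
  shows "integrable (PiM I (\<lambda>_. unif01)) (range_pair_sum p I)"
    and "(\<integral>x. range_pair_sum p I x \<partial>PiM I (\<lambda>_. unif01)) = real (card I) * (real (card I) - 1) *
      (1 / ((p + real (card I - 2) + 1) * (p + real (card I - 2) + 2)))"
proof -
  have "(\<lambda>w::real \<times> real \<times> real. of_bool (fst w \<le> snd (snd w) \<and> snd (snd w) \<le> fst (snd w)) :: real)
      \<in> borel_measurable (borel \<Otimes>\<^sub>M (borel \<Otimes>\<^sub>M borel))" by measurable
  note pair_sum = integral_pair_sum[where h="\<lambda>a b c. of_bool (a \<le> c \<and> c \<le> b)",
      OF p I this _ range_pair_integral[OF p]]
  show "integrable (PiM I (\<lambda>_. unif01)) (range_pair_sum p I)"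
    and "(\<integral>x. range_pair_sum p I x \<partial>PiM I (\<lambda>_. unif01)) = real (card I) * (real (card I) - 1) *
      (1 / ((p + real (card I - 2) + 1) * (p + real (card I - 2) + 2)))"
    using pair_sum unfolding range_pair_sum_def[abs_def] by auto
qed

lemma AE_E_N_eq_pair_sums:
  assumes p: "0 < p" "p \<le> 1" and N: "N \<ge> 1"
  shows "AE x in PiM {..<N} (\<lambda>_. unif01). E_N N p x = gap_pair_sum p {..<N} x + range_pair_sum p {..<N} x"
  using AE_PiM_unif01_in_unit[OF finite_lessThan] AE_PiM_unif01_inj_on[OF finite_lessThan]
proof eventually_elim
  case (elim x)
  then have "x ` {..<N} \<subseteq> {0..1}" by auto
  then show ?case using E_N_eq_pair_sums[OF p N elim(2)] by simp
qed

lemma expected_E_eq_binomial_sum: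
  assumes p: "0 < p" "p \<le> 1" and N: "N \<ge> 1"
  shows "expected_E N p = real N * (real N - 1) *
     ((\<Sum>k\<le>N-2. of_nat ((N-2) choose k) * (-1)^k / ((p + k + 1) * (p + k + 2)))
      + 1 / ((p + real (N-2) + 1) * (p + real (N-2) + 2)))"
proof -
  let ?M = "PiM {..<N} (\<lambda>_. unif01)"
  note gap = integral_gap_pair_sum[OF p(1) finite_lessThan[of N]]
  note range = integral_range_pair_sum[OF p(1) finite_lessThan[of N]]
  have "expected_E N p = (\<integral>x. gap_pair_sum p {..<N} x + range_pair_sum p {..<N} x \<partial>?M)"
    unfolding expected_E_def unif_points_eq_PiM_unif01
    using gap(1) range(1) by (intro integral_cong_AE E_N_measurable AE_E_N_eq_pair_sums p N) auto
  also have "\<dots> = (\<integral>x. gap_pair_sum p {..<N} x \<partial>?M) + (\<integral>x. range_pair_sum p {..<N} x \<partial>?M)"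
    using gap(1) range(1) by (rule Bochner_Integration.integral_add)
  finally show ?thesis using gap(2) range(2) by (simp add: algebra_simps)
qed

section \<open>Closed form and asymptotics\<close>

definition alt_binomial_sum :: "nat \<Rightarrow> real \<Rightarrow> real" where
  "alt_binomial_sum n x = (\<Sum>k\<le>n. of_nat (n choose k) * (-1)^k / (x + k))"

lemma alt_binomial_sum_Suc:
  assumes "0 < x" shows "alt_binomial_sum (Suc n) x = alt_binomial_sum n x - alt_binomial_sum n (x + 1)"
proof -
  define f where "f k = of_nat (n choose k) * (-1)^k / (x + k)" for k
  have "alt_binomial_sum (Suc n) x = of_nat (Suc n choose 0) * (-1)^0 / (x + 0)
      + (\<Sum>k\<le>n. of_nat (Suc n choose Suc k) * (-1)^(Suc k) / (x + Suc k))"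
    unfolding alt_binomial_sum_def by (subst sum.atMost_Suc_shift) simp
  also have "(\<Sum>k\<le>n. of_nat (Suc n choose Suc k) * (-1)^(Suc k) / (x + Suc k))
      = (\<Sum>k\<le>n. f (Suc k)) - (\<Sum>k\<le>n. of_nat (n choose k) * (-1)^k / ((x + 1) + k))"
    unfolding f_def sum_subtractf[symmetric]
  proof (intro sum.cong refl)
    fix k
    have b: "real (Suc n choose Suc k) = real (n choose k) + real (n choose Suc k)" by simp
    have d: "x + real (Suc k) = x + 1 + real k" by simp
    define D where "D = x + 1 + real k"
    show "of_nat (Suc n choose Suc k) * (-1)^(Suc k) / (x + Suc k) =
      of_nat (n choose Suc k) * (-1)^(Suc k) / (x + Suc k) - of_nat (n choose k) * (-1)^k / ((x + 1) + k)"
      unfolding of_nat_id b d D_def[symmetric] power_Suc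
      by (simp add: add_divide_distrib diff_divide_distrib algebra_simps)
  qed
  also have "(\<Sum>k\<le>n. f (Suc k)) = (\<Sum>k\<le>Suc n. f k) - f 0"
    by (subst sum.atMost_Suc_shift) simp
  also have "(\<Sum>k\<le>Suc n. f k) = alt_binomial_sum n x"
    unfolding alt_binomial_sum_def f_def by simp
  finally show ?thesis unfolding alt_binomial_sum_def f_def by simp
qed

lemma alt_binomial_sum_eq_pochhammer: "0 < x \<Longrightarrow> alt_binomial_sum n x = fact n / pochhammer x (Suc n)"
proof (induction n arbitrary: x)
  case 0 then show ?case by (simp add: alt_binomial_sum_def)
next
  case (Suc n)
  have px: "pochhammer x (Suc n) > 0" "pochhammer (x+1) (Suc n) > 0" using Suc.prems
    by (auto intro: pochhammer_pos)
  have r1: "pochhammer x (Suc (Suc n)) = x * pochhammer (x + 1) (Suc n)" by (rule pochhammer_rec)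
  have r2: "pochhammer x (Suc (Suc n)) = (x + of_nat (Suc n)) * pochhammer x (Suc n)" by (rule pochhammer_rec')
  have "alt_binomial_sum (Suc n) x = fact n / pochhammer x (Suc n) - fact n / pochhammer (x + 1) (Suc n)"
    using Suc.IH[of x] Suc.IH[of "x+1"] Suc.prems by (simp add: alt_binomial_sum_Suc)
  also have "\<dots> = fact n * (x + of_nat (Suc n)) / pochhammer x (Suc (Suc n)) - fact n * x / pochhammer x (Suc (Suc n))"
  proof -
    have xn: "x + of_nat (Suc n) > 0" using Suc.prems by simp
    have a: "fact n / pochhammer x (Suc n) = fact n * (x + of_nat (Suc n)) / pochhammer x (Suc (Suc n))"
      unfolding r2 using xn px by simp
    have b: "fact n / pochhammer (x + 1) (Suc n) = fact n * x / pochhammer x (Suc (Suc n))"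
      unfolding r1 using Suc.prems px by simp
    show ?thesis using a b by simp
  qed
  also have "\<dots> = fact (Suc n) / pochhammer x (Suc (Suc n))"
    by (simp add: field_simps diff_divide_distrib[symmetric] algebra_simps)
  finally show ?case .
qed

lemma binomial_gap_sum_eq_pochhammer:
  fixes p :: real
  assumes p: "0 < p"
  shows "(\<Sum>k\<le>n. of_nat (n choose k) * (-1)^k / ((p + k + 1) * (p + k + 2))) = fact (Suc n) / pochhammer (p + 1) (Suc (Suc n))"
proof -
  have "(\<Sum>k\<le>n. of_nat (n choose k) * (-1)^k / ((p + k + 1) * (p + k + 2)))
     = (\<Sum>k\<le>n. of_nat (n choose k) * (-1)^k / (p + 1 + k) - of_nat (n choose k) * (-1)^k / (p + 2 + k))"
  proof (intro sum.cong refl)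
    fix k assume "k \<in> {..n}"
    have "p + k + 1 > 0" "p + k + 2 > 0" using p by auto
    then show "of_nat (n choose k) * (-1)^k / ((p + k + 1) * (p + k + 2))
        = of_nat (n choose k) * (-1)^k / (p + 1 + k) - of_nat (n choose k) * (-1)^k / (p + 2 + k)"
      by (simp add: field_simps)
  qed
  also have "\<dots> = alt_binomial_sum n (p + 1) - alt_binomial_sum n (p + 2)"
    unfolding alt_binomial_sum_def by (simp add: sum_subtractf add_ac)
  also have "\<dots> = alt_binomial_sum (Suc n) (p + 1)" using alt_binomial_sum_Suc[of "p+1" n] p by (simp add: add_ac)
  also have "\<dots> = fact (Suc n) / pochhammer (p + 1) (Suc (Suc n))" using p by (simp add: alt_binomial_sum_eq_pochhammer)
  finally show ?thesis .
qed

lemma pos_not_nonpos_Ints: "(0::real) < z \<Longrightarrow> z \<notin> \<int>\<^sub>\<le>\<^sub>0"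
  by (auto dest: nonpos_Ints_nonpos)

lemma Gamma_add_two:
  fixes x :: real
  assumes "0 < x"
  shows "Gamma (x + 2) = (x + 1) * x * Gamma x"
proof -
  have "Gamma (x + 2) = Gamma ((x + 1) + 1)" by (simp add: add.assoc)
  also have "\<dots> = (x + 1) * Gamma (x + 1)"
    using assms by (intro Gamma_plus1 pos_not_nonpos_Ints) simp
  also have "Gamma (x + 1) = x * Gamma x"
    using assms by (intro Gamma_plus1 pos_not_nonpos_Ints)
  finally show ?thesis by simp
qed

lemma expected_E_eq_pochhammer:
  assumes p: "0 < p" "p \<le> 1" and N: "N \<ge> 2"
  shows "expected_E N p = real N * (real N - 1) *
     (fact (N - 1) / pochhammer (p + 1) N + 1 / ((real N + p) * (real N + p - 1)))"
proof -
  have "Suc (N - 2) = N - 1" "Suc (Suc (N - 2)) = N" "real (N - 2) = real N - 2"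
    using N by auto
  moreover have "(p + (real N - 2) + 1) * (p + (real N - 2) + 2) = (real N + p) * (real N + p - 1)"
    by (simp add: algebra_simps)
  ultimately show ?thesis
    using expected_E_eq_binomial_sum[OF p] binomial_gap_sum_eq_pochhammer[OF p(1), of "N - 2"] N
    by simp
qed

lemma expected_E_Gamma_form:
  assumes p: "0 < p" "p \<le> 1" and N: "N \<ge> 2"
  shows "expected_E N p = Gamma (real N + 1) / Gamma (real N + p + 1) *
           ((real N - 1) * Gamma (p + 1) + Gamma (real N + p - 1) / Gamma (real N - 1))"
proof -
  define n where "n = real N"
  have n: "n - 1 > 0" "n + p - 1 > 0" using N p unfolding n_def by auto
  have Gamma_n: "Gamma (n + 1) = n * (n - 1) * Gamma (n - 1)"
    using Gamma_add_two[OF n(1)] by (simp add: add_ac)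
  define D where "D = (n + p) * (n + p - 1)"
  have Gamma_np: "Gamma (n + p + 1) = D * Gamma (n + p - 1)"
    using Gamma_add_two[OF n(2)] unfolding D_def by (simp add: algebra_simps)
  have "fact (N - 1) = Gamma (n - 1 + 1)"
    using N Gamma_fact[of "N - 1", where 'a=real] unfolding n_def by (simp add: of_nat_diff add.commute)
  also have "\<dots> = (n - 1) * Gamma (n - 1)"
    using n by (intro Gamma_plus1 pos_not_nonpos_Ints)
  finally have fact_N: "fact (N - 1) = (n - 1) * Gamma (n - 1)" .
  have poch: "pochhammer (p + 1) N = Gamma (n + p + 1) / Gamma (p + 1)"
    using p unfolding n_def by (subst pochhammer_Gamma) (auto intro: pos_not_nonpos_Ints simp: add_ac)
  have pos: "Gamma (n - 1) > 0" "Gamma (n + p - 1) > 0" "Gamma (p + 1) > 0" "D > 0"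
    using n p unfolding D_def by auto
  show ?thesis
    unfolding expected_E_eq_pochhammer[OF p N] n_def[symmetric] D_def[symmetric]
      poch fact_N Gamma_n Gamma_np
    using pos by (simp add: field_simps)
qed

lemma expected_E_asymptotics:
  assumes p: "0 < p" "p < 1"
  shows "(\<lambda>N. real N powr (p - 1) * expected_E N p) \<longlonglongrightarrow> Gamma (p + 1)"
proof -
  define a where "a N = Gamma_series' (p + 1) N * ((real N - 1) / real N)
       + real N powr (p - 1) * (real N * (real N - 1) / ((real N + p) * (real N + p - 1)))" for N :: nat
  have "eventually (\<lambda>N. a N = real N powr (p - 1) * expected_E N p) sequentially"
    using eventually_ge_at_top[of 2]
  proof eventually_elim
    case (elim N)
    then have N: "real N > 0" by simp
    have "real N powr (p - 1) * real N ^ 2 = real N powr (p - 1) * real N powr 2"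
      using N by (simp add: powr_numeral)
    also have "\<dots> = real N powr (p + 1)"
      by (subst powr_add[symmetric]) (simp add: add.commute)
    also have "\<dots> = exp ((p + 1) * of_real (ln (of_nat N)))"
      using N by (simp add: powr_def mult.commute)
    finally have exp_eq: "exp ((p + 1) * of_real (ln (of_nat N))) = real N powr (p - 1) * real N ^ 2" ..
    have "F * (x * real N ^ 2) / P * ((real N - 1) / real N) + x * (real N * (real N - 1) / D)
        = x * (real N * (real N - 1) * (F / P + 1 / D))" if "P \<noteq> 0" "D \<noteq> 0" for F P D x :: real
      using N that by (simp add: field_simps power2_eq_square)
    moreover have "pochhammer (p + 1) N \<noteq> 0" "(real N + p) * (real N + p - 1) \<noteq> 0"
      using p elim by (auto simp: pochhammer_eq_0_iff)
    ultimately show ?case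
      unfolding a_def expected_E_eq_pochhammer[OF p(1) less_imp_le[OF p(2)] elim] Gamma_series'_def exp_eq
      by (simp only: mult.assoc)
  qed
  moreover have "(\<lambda>N. (real N - 1) / real N) \<longlonglongrightarrow> 1" by real_asymp
  moreover have "(\<lambda>N. real N * (real N - 1) / ((real N + p) * (real N + p - 1))) \<longlonglongrightarrow> 1"
    by real_asymp
  moreover have "(\<lambda>N. real N powr (p - 1)) \<longlonglongrightarrow> 0"
    using p by (intro tendsto_neg_powr filterlim_real_sequentially) auto
  ultimately have "a \<longlonglongrightarrow> Gamma (p + 1) * 1 + 0 * 1"
    unfolding a_def by (intro tendsto_intros Gamma_series'_LIMSEQ) auto
  with \<open>eventually _ sequentially\<close> show ?thesis
    using tendsto_cong by fastforce
qed

theorem mainTheorem12: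
  fixes p :: real
  assumes "0 < p" and "p < 1"
  shows "(\<forall>N::nat. N \<ge> 3 \<longrightarrow>
           expected_E N p =
             Gamma (real N + 1) / Gamma (real N + p + 1) *
             ((real N - 1) * Gamma (p + 1) + Gamma (real N + p - 1) / Gamma (real N - 1)))
         \<and> (\<lambda>N. real N powr (p - 1) * expected_E N p) \<longlonglongrightarrow> Gamma (p + 1)"
  using expected_E_Gamma_form expected_E_asymptotics assms by auto

end
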